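(* Let $n\ge k$, $s\ge t \ge 0$ and $1\le \ell \le k-1$ be integers. Suppose that $\mathcal{H} \subset EM(n,k,s,t)$ and $|\mathcal{H}| = m$. Then $|\partial_{\ell}\mathcal{H}|\ge |\partial_{\ell} L_{m}EM(n,k,s,t)|$.
   Context: $[n]=\{1,\dots,n\}$, $\binom{[n]}{k}$ is the family of $k$-subsets of $[n]$. For $0\le t\le\min\{k,s\}$, $EM(n,k,s,t)=\{A\in\binom{[n]}{k}: |A\cap[s]|\ge t\}$; $EM(n,k,s,t)=\emptyset$ if $t>\min\{k,s\}$, and $=\binom{[n]}{k}$ if $n\le s$. $\partial_\ell\mathcal{H}=\{A\in\binom{[n]}{k-\ell}: A\subset B\text{ for some }B\in\mathcal{H}\}$. Colex order: $A\prec B$ iff $\max\big((A\setminus B)\cup(B\setminus A)\big)\in B$; $L_m\mathcal{F}$ is the set of the first $m$ members of $\mathcal{F}$ in colex order. *)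

theory Defs
  imports Main
begin

definition ksubsets :: "nat \<Rightarrow> nat \<Rightarrow> nat set set" where
  "ksubsets n k = {A. A \<subseteq> {1..n} \<and> card A = k}"

definition EM :: "nat \<Rightarrow> nat \<Rightarrow> nat \<Rightarrow> nat \<Rightarrow> nat set set" where
  "EM n k s t = {A \<in> ksubsets n k. card (A \<inter> {1..s}) \<ge> t}"

definition shadow :: "nat \<Rightarrow> nat \<Rightarrow> nat set set \<Rightarrow> nat set set" where
  "shadow k l H = {A. finite A \<and> card A = k - l \<and> (\<exists>B\<in>H. A \<subseteq> B)}"

definition colex_less :: "nat set \<Rightarrow> nat set \<Rightarrow> bool" where
  "colex_less A B \<longleftrightarrow> A \<noteq> B \<and> Max ((A - B) \<union> (B - A)) \<in> B"

definition colex_initial :: "nat \<Rightarrow> nat set set \<Rightarrow> nat set set" where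
  "colex_initial m F = {A \<in> F. card {B \<in> F. colex_less B A} < m}"

end

theory Submission
  imports Defs
begin

(* Frankl's shifting proof of Kruskal-Katona, run on the families EM_on G k s t of k-subsets of
   a ground set G of positive integers that meet [s] in at least t points; the induction on |G|
   removes the least element g of G.
   Compressions replacing some x by g keep a family inside EM_on G k s t (as g < x, g lies in [s]
   whenever x does) and do not increase l-shadows, so H may be assumed g-shifted; colex initial
   segments C are g-shifted anyway. For a g-shifted family the l-shadow splits disjointly into
   the (l-1)-shadow of the link H(g) and g added to the l-shadow of H(g). The link C(g) is again
   a colex initial segment of an EM family on G - {g}, so by induction everything reduces to
   |C(g)| <= |H(g)|. If this failed, the g-avoiding part of H would be larger than that of C;
   by induction its 1-shadow, which lies in H(g) by shiftedness, is at least the 1-shadow of a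
   colex initial segment D of g-avoiding sets with D not contained in C, and that 1-shadow
   contains all of C(g). *)

lemma card_insert_remove:
  assumes "finite A" "x \<in> A" "g \<notin> A"
  shows "card (insert g (A - {x})) = card A"
proof -
  have "card (insert g (A - {x})) = Suc (card (A - {x}))" using assms by simp
  then show ?thesis using card_Suc_Diff1[OF assms(1,2)] by simp
qed

section \<open>Colex order\<close>

lemma colex_less_iff:
  assumes "finite A" "finite B"
  shows "colex_less A B \<longleftrightarrow> (\<exists>m\<in>B. m \<notin> A \<and> (\<forall>y>m. y \<in> A \<longleftrightarrow> y \<in> B))"
proof
  assume h: "colex_less A B"
  let ?S = "(A - B) \<union> (B - A)"
  have fin: "finite ?S" using assms by auto
  have "Max ?S \<in> ?S" using h Max_in[OF fin] unfolding colex_less_def by auto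
  moreover have "Max ?S \<in> B" using h unfolding colex_less_def by auto
  moreover have "y \<in> A \<longleftrightarrow> y \<in> B" if "Max ?S < y" for y
    using that Max_ge[OF fin, of y] by auto
  ultimately show "\<exists>m\<in>B. m \<notin> A \<and> (\<forall>y>m. y \<in> A \<longleftrightarrow> y \<in> B)" by blast
next
  assume "\<exists>m\<in>B. m \<notin> A \<and> (\<forall>y>m. y \<in> A \<longleftrightarrow> y \<in> B)"
  then obtain m where m: "m \<in> B" "m \<notin> A" "\<forall>y>m. y \<in> A \<longleftrightarrow> y \<in> B" by blast
  let ?S = "(A - B) \<union> (B - A)"
  have "Max ?S = m"
  proof (rule Max_eqI)
    show "finite ?S" using assms by auto
    show "y \<le> m" if "y \<in> ?S" for y using that m(3) not_le_imp_less by blast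
    show "m \<in> ?S" using m by auto
  qed
  then show "colex_less A B" unfolding colex_less_def using m by auto
qed

lemma colex_less_irrefl: "\<not> colex_less A A"
  unfolding colex_less_def by auto

lemma colex_less_total:
  assumes "finite A" "finite B" "A \<noteq> B"
  shows "colex_less A B \<or> colex_less B A"
proof -
  let ?S = "(A - B) \<union> (B - A)"
  have "Max ?S \<in> ?S" using assms by (intro Max_in) auto
  then show ?thesis unfolding colex_less_def using assms(3) by (auto simp: Un_commute)
qed

lemma colex_less_trans:
  assumes "finite A" "finite B" "finite C" "colex_less A B" "colex_less B C"
  shows "colex_less A C"
proof -
  obtain m1 where m1: "m1 \<in> B" "m1 \<notin> A" "\<forall>y>m1. y \<in> A \<longleftrightarrow> y \<in> B"
    using assms(4) colex_less_iff[OF assms(1,2)] by blast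
  obtain m2 where m2: "m2 \<in> C" "m2 \<notin> B" "\<forall>y>m2. y \<in> B \<longleftrightarrow> y \<in> C"
    using assms(5) colex_less_iff[OF assms(2,3)] by blast
  have "m1 \<noteq> m2" using m1 m2 by auto
  then have "\<exists>m\<in>C. m \<notin> A \<and> (\<forall>y>m. y \<in> A \<longleftrightarrow> y \<in> C)"
    using m1 m2 by (metis less_trans linorder_neqE_nat)
  then show ?thesis using colex_less_iff[OF assms(1,3)] by blast
qed

lemma colex_less_insert:
  assumes "finite A" "finite B" "g \<notin> B" "colex_less A B"
  shows "colex_less (insert g A) (insert g B)"
proof -
  obtain m where "m \<in> B" "m \<notin> A" "\<forall>y>m. y \<in> A \<longleftrightarrow> y \<in> B"
    using colex_less_iff[OF assms(1,2)] assms(4) by blast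
  then have "\<exists>m\<in>insert g B. m \<notin> insert g A \<and> (\<forall>y>m. y \<in> insert g A \<longleftrightarrow> y \<in> insert g B)"
    using assms(3) by auto
  then show ?thesis using colex_less_iff assms(1,2) by simp
qed

lemma colex_replace_least:
  assumes "finite P" "finite Q" "card P = card Q" "colex_less P Q"
    and "g \<in> P" "\<forall>y\<in>Q. g < y" "x \<notin> P" "\<forall>y\<in>Q. y < x \<longrightarrow> y \<in> P"
  shows "insert x (P - {g}) = Q \<or> colex_less (insert x (P - {g})) Q"
proof -
  define A where "A = insert x (P - {g})"
  obtain m where m: "m \<in> Q" "m \<notin> P" "\<forall>y>m. y \<in> P \<longleftrightarrow> y \<in> Q"
    using assms(4) colex_less_iff[OF assms(1,2)] by blast
  have "x \<le> m" using assms(8) m(1,2) by (meson not_le)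
  have "g < m" using assms(6) m(1) by blast
  show ?thesis
  proof (cases "x = m")
    case True
    have "Q \<subseteq> A"
    proof
      fix y assume y: "y \<in> Q"
      then have "y \<noteq> g" using assms(6) by blast
      consider "m < y" | "y = m" | "y < m" by linarith
      then show "y \<in> A"
        by cases (use y True m(3) assms(8) \<open>y \<noteq> g\<close> in \<open>auto simp: A_def\<close>)
    qed
    moreover have "card A = card P"
      unfolding A_def using assms(1,5,7) by (intro card_insert_remove) auto
    moreover have "finite A" unfolding A_def using assms(1) by simp
    ultimately have "A = Q" using assms(3) by (metis card_subset_eq)
    then show ?thesis unfolding A_def by simp
  next
    case False
    have "\<exists>m\<in>Q. m \<notin> A \<and> (\<forall>y>m. y \<in> A \<longleftrightarrow> y \<in> Q)"
      using m False \<open>x \<le> m\<close> \<open>g < m\<close> unfolding A_def by auto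
    then show ?thesis using colex_less_iff assms(1,2) unfolding A_def by simp
  qed
qed

definition is_colex_initial :: "nat set set \<Rightarrow> nat set set \<Rightarrow> bool" where
  "is_colex_initial I F \<longleftrightarrow> I \<subseteq> F \<and> (\<forall>A\<in>I. \<forall>B\<in>F. colex_less B A \<longrightarrow> B \<in> I)"

lemma colex_initial_subset: "colex_initial m F \<subseteq> F"
  unfolding colex_initial_def by auto

lemma colex_initial_mono: "a \<le> b \<Longrightarrow> colex_initial a F \<subseteq> colex_initial b F"
  unfolding colex_initial_def by auto

lemma card_colex_predecessors_less:
  assumes "finite F" "\<forall>X\<in>F. finite X" "A \<in> F" "B \<in> F" "colex_less B A"
  shows "card {C \<in> F. colex_less C B} < card {C \<in> F. colex_less C A}"
proof (rule psubset_card_mono)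
  show "finite {C \<in> F. colex_less C A}" using assms(1) by simp
  have "{C \<in> F. colex_less C B} \<subseteq> {C \<in> F. colex_less C A}"
    using assms colex_less_trans[of _ B A] by auto
  moreover have "B \<in> {C \<in> F. colex_less C A} - {C \<in> F. colex_less C B}"
    using assms colex_less_irrefl by auto
  ultimately show "{C \<in> F. colex_less C B} \<subset> {C \<in> F. colex_less C A}" by blast
qed

lemma is_colex_initial_colex_initial:
  assumes "finite F" "\<forall>X\<in>F. finite X"
  shows "is_colex_initial (colex_initial m F) F"
  unfolding is_colex_initial_def
proof (intro conjI colex_initial_subset ballI impI)
  fix A B assume A: "A \<in> colex_initial m F" and "B \<in> F" "colex_less B A"
  then have "card {C \<in> F. colex_less C B} < card {C \<in> F. colex_less C A}"
    using card_colex_predecessors_less[OF assms] colex_initial_subset by blast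
  then show "B \<in> colex_initial m F" using A \<open>B \<in> F\<close> unfolding colex_initial_def by auto
qed

lemma is_colex_initial_eq:
  assumes "finite F" "\<forall>X\<in>F. finite X" "is_colex_initial I F"
  shows "I = colex_initial (card I) F"
proof (intro set_eqI iffI)
  have IF: "I \<subseteq> F" using assms(3) unfolding is_colex_initial_def by auto
  fix A
  show "A \<in> colex_initial (card I) F" if A: "A \<in> I"
  proof -
    have "{C \<in> F. colex_less C A} \<subseteq> I - {A}"
      using assms(3) A colex_less_irrefl unfolding is_colex_initial_def by auto
    then have "card {C \<in> F. colex_less C A} < card I"
      using IF assms(1) A by (intro psubset_card_mono) (auto intro: finite_subset)
    then show ?thesis unfolding colex_initial_def using A IF by auto
  qed
  show "A \<in> I" if A: "A \<in> colex_initial (card I) F"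
  proof (rule ccontr)
    assume "A \<notin> I"
    have AF: "A \<in> F" using A unfolding colex_initial_def by auto
    have "I \<subseteq> {C \<in> F. colex_less C A}"
    proof
      fix C assume C: "C \<in> I"
      then have "C \<noteq> A" "\<not> colex_less A C"
        using \<open>A \<notin> I\<close> assms(3) AF unfolding is_colex_initial_def by auto
      then show "C \<in> {C \<in> F. colex_less C A}"
        using colex_less_total[of C A] IF C AF assms(2) by auto
    qed
    then have "card I \<le> card {C \<in> F. colex_less C A}"
      using assms(1) by (intro card_mono) auto
    then show False using A unfolding colex_initial_def by auto
  qed
qed

lemma card_colex_initial:
  assumes "finite F" "\<forall>X\<in>F. finite X" "m \<le> card F"
  shows "card (colex_initial m F) = m"
proof -
  define rank where "rank A = card {C \<in> F. colex_less C A}" for A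
  have inj: "inj_on rank F"
  proof (rule inj_onI)
    fix A B assume AB: "A \<in> F" "B \<in> F" "rank A = rank B"
    show "A = B"
    proof (rule ccontr)
      assume "A \<noteq> B"
      then have "colex_less A B \<or> colex_less B A" using colex_less_total AB assms(2) by auto
      then have "rank A < rank B \<or> rank B < rank A"
        using card_colex_predecessors_less[OF assms(1,2)] AB unfolding rank_def by blast
      then show False using AB(3) by simp
    qed
  qed
  have "rank ` F \<subseteq> {..<card F}"
  proof
    fix y assume "y \<in> rank ` F"
    then obtain A where A: "A \<in> F" "y = rank A" by auto
    have "{C \<in> F. colex_less C A} \<subseteq> F - {A}" using colex_less_irrefl by auto
    then have "rank A < card F"
      unfolding rank_def using assms(1) A by (intro psubset_card_mono) auto
    then show "y \<in> {..<card F}" using A by auto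
  qed
  then have rank_F: "rank ` F = {..<card F}"
    using card_image[OF inj] by (intro card_subset_eq) auto
  have "colex_initial m F = {A \<in> F. rank A < m}" unfolding colex_initial_def rank_def by auto
  then have "rank ` colex_initial m F = rank ` F \<inter> {..<m}" by auto
  also have "\<dots> = {..<m}" using rank_F assms(3) by auto
  finally have "card (rank ` colex_initial m F) = m" by simp
  moreover have "inj_on rank (colex_initial m F)"
    using inj colex_initial_subset by (rule inj_on_subset)
  ultimately show ?thesis by (simp add: card_image)
qed

lemma card_colex_initial_card:
  assumes "finite F" "\<forall>X\<in>F. finite X" "H \<subseteq> F"
  shows "card (colex_initial (card H) F) = card H"
  using card_colex_initial[OF assms(1,2)] card_mono[OF assms(1,3)] .

definition lshadow :: "nat \<Rightarrow> nat set set \<Rightarrow> nat set set" where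
  "lshadow l F = {A. \<exists>B\<in>F. A \<subseteq> B \<and> card A + l = card B}"

lemma lshadowI: "B \<in> F \<Longrightarrow> A \<subseteq> B \<Longrightarrow> card A + l = card B \<Longrightarrow> A \<in> lshadow l F"
  unfolding lshadow_def by blast

lemma lshadow_mono: "F \<subseteq> F' \<Longrightarrow> lshadow l F \<subseteq> lshadow l F'"
  unfolding lshadow_def by auto

lemma finite_lshadow: "finite F \<Longrightarrow> \<forall>B\<in>F. finite B \<Longrightarrow> finite (lshadow l F)"
  by (rule finite_subset[of _ "Pow (\<Union>F)"]) (auto simp: lshadow_def)

lemma lshadow_0: "\<forall>B\<in>F. finite B \<Longrightarrow> lshadow 0 F = F"
  unfolding lshadow_def by (auto dest: card_subset_eq)

lemma shadow_eq_lshadow: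
  assumes "\<forall>B\<in>F. finite B \<and> card B = k" "l \<le> k"
  shows "shadow k l F = lshadow l F"
  using assms unfolding shadow_def lshadow_def by (auto intro: finite_subset)

lemma card_lshadow_colex_initial_mono:
  assumes "finite F" "\<forall>X\<in>F. finite X" "a \<le> b"
  shows "card (lshadow l (colex_initial a F)) \<le> card (lshadow l (colex_initial b F))"
proof (intro card_mono finite_lshadow lshadow_mono colex_initial_mono)
  show "finite (colex_initial b F)" using colex_initial_subset assms(1) by (rule finite_subset)
  show "\<forall>B\<in>colex_initial b F. finite B" using assms(2) colex_initial_subset by blast
qed fact

section \<open>Compressions\<close>

definition compress_set :: "nat \<Rightarrow> nat \<Rightarrow> nat set set \<Rightarrow> nat set \<Rightarrow> nat set" where
  "compress_set g x H A =
     (if x \<in> A \<and> g \<notin> A \<and> insert g (A - {x}) \<notin> H then insert g (A - {x}) else A)"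

definition compress :: "nat \<Rightarrow> nat \<Rightarrow> nat set set \<Rightarrow> nat set set" where
  "compress g x H = compress_set g x H ` H"

definition shifted_to :: "nat \<Rightarrow> nat set set \<Rightarrow> bool" where
  "shifted_to g H \<longleftrightarrow> (\<forall>A\<in>H. \<forall>x\<in>A. g \<notin> A \<longrightarrow> insert g (A - {x}) \<in> H)"

lemma inj_on_compress_set:
  assumes "g \<noteq> x" shows "inj_on (compress_set g x H) H"
proof (rule inj_onI)
  fix A B assume A: "A \<in> H" and B: "B \<in> H" and eq: "compress_set g x H A = compress_set g x H B"
  show "A = B"
  proof (cases "x \<in> A \<and> g \<notin> A \<and> insert g (A - {x}) \<notin> H";
         cases "x \<in> B \<and> g \<notin> B \<and> insert g (B - {x}) \<notin> H")
    assume "x \<in> A \<and> g \<notin> A \<and> insert g (A - {x}) \<notin> H" "x \<in> B \<and> g \<notin> B \<and> insert g (B - {x}) \<notin> H"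
    moreover from this eq have "insert g (A - {x}) = insert g (B - {x})"
      unfolding compress_set_def by simp
    ultimately have "A - {x} = B - {x}" by (metis Diff_insert_absorb Diff_iff)
    then show "A = B" using \<open>x \<in> A \<and> _\<close> \<open>x \<in> B \<and> _\<close> by (metis insert_Diff)
  qed (use A B eq in \<open>auto simp: compress_set_def split: if_splits\<close>)
qed

lemma card_compress: "g \<noteq> x \<Longrightarrow> card (compress g x H) = card H"
  unfolding compress_def by (rule card_image[OF inj_on_compress_set])

lemma mem_compress_if_stays:
  assumes "A \<in> F" "x \<in> A \<Longrightarrow> g \<notin> A \<Longrightarrow> insert g (A - {x}) \<in> F"
  shows "A \<in> compress g x F"
proof -
  have "compress_set g x F A = A" using assms(2) unfolding compress_set_def by auto
  then show ?thesis using assms(1) unfolding compress_def by (metis image_eqI)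
qed

lemma mem_compress_if_moves:
  assumes "A \<in> F" "x \<in> A" "g \<notin> A" "insert g (A - {x}) \<notin> F"
  shows "insert g (A - {x}) \<in> compress g x F"
proof -
  have "compress_set g x F A = insert g (A - {x})"
    using assms(2-4) unfolding compress_set_def by simp
  then show ?thesis using assms(1) unfolding compress_def by (metis image_eqI)
qed

lemma insert_remove_mem_lshadow:
  assumes "B \<in> F" "finite B" "A \<subseteq> B" "card A + l = card B" "x \<in> A" "g \<notin> A"
    and "g \<notin> B \<Longrightarrow> insert g (B - {x}) \<in> F"
  shows "insert g (A - {x}) \<in> lshadow l F"
proof -
  have c_ins: "card (insert g (A - {x})) = card A"
    using assms(2,3,5,6) by (intro card_insert_remove) (auto intro: finite_subset)
  show ?thesis
  proof (cases "g \<in> B")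
    case True
    then show ?thesis using assms(1,3,4) c_ins by (intro lshadowI[of B]) auto
  next
    case False
    then have "card (insert g (B - {x})) = card B"
      using assms(3,5) card_insert_remove[OF assms(2) _ False] by auto
    then show ?thesis
      using False assms(3,4,7) c_ins by (intro lshadowI[of "insert g (B - {x})"]) auto
  qed
qed

lemma lshadow_compress_subset:
  assumes fin: "\<forall>B\<in>F. finite B" and gx: "g \<noteq> x"
  shows "lshadow l (compress g x F) \<subseteq> compress g x (lshadow l F)"
proof
  fix A' assume "A' \<in> lshadow l (compress g x F)"
  then obtain B where B: "B \<in> F" and A'B: "A' \<subseteq> compress_set g x F B"
    and cA': "card A' + l = card (compress_set g x F B)"
    unfolding lshadow_def compress_def by auto
  have finB: "finite B" using fin B by auto
  show "A' \<in> compress g x (lshadow l F)"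
  proof (cases "x \<in> B \<and> g \<notin> B \<and> insert g (B - {x}) \<notin> F")
    case False
    then have B_stays: "compress_set g x F B = B" unfolding compress_set_def by auto
    have "insert g (A' - {x}) \<in> lshadow l F" if "x \<in> A'" "g \<notin> A'"
    proof (rule insert_remove_mem_lshadow[OF B finB _ _ that])
      show "A' \<subseteq> B" "card A' + l = card B" using A'B cA' B_stays by auto
      then show "g \<notin> B \<Longrightarrow> insert g (B - {x}) \<in> F" using False that by auto
    qed
    moreover have "A' \<in> lshadow l F" using B A'B cA' B_stays by (intro lshadowI) auto
    ultimately show ?thesis by (intro mem_compress_if_stays)
  next
    case True
    then have B_moves: "compress_set g x F B = insert g (B - {x})"
      unfolding compress_set_def by auto
    have cB: "card (insert g (B - {x})) = card B" using True finB by (intro card_insert_remove) auto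
    have "x \<notin> A'" using A'B B_moves gx by auto
    show ?thesis
    proof (cases "g \<in> A' \<and> A' \<notin> lshadow l F")
      case False
      have "A' \<in> lshadow l F" if "g \<notin> A'"
        using that A'B B_moves cA' cB B by (intro lshadowI) auto
      then show ?thesis using False \<open>x \<notin> A'\<close> by (auto intro: mem_compress_if_stays)
    next
      case True
      define A where "A = insert x (A' - {g})"
      have "card A = card A'"
        unfolding A_def using \<open>x \<notin> A'\<close> True A'B B_moves finB
        by (intro card_insert_remove) (auto intro: finite_subset)
      then have "A \<in> lshadow l F"
        using B A'B B_moves cA' cB \<open>x \<in> B \<and> _\<close> unfolding A_def by (intro lshadowI) auto
      moreover have "x \<in> A" "g \<notin> A" unfolding A_def using gx by auto
      moreover have "A' = insert g (A - {x})" unfolding A_def using \<open>x \<notin> A'\<close> True gx by auto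
      ultimately show ?thesis using mem_compress_if_moves True by metis
    qed
  qed
qed

lemma card_lshadow_compress_le:
  assumes "finite F" "\<forall>B\<in>F. finite B" "g \<noteq> x"
  shows "card (lshadow l (compress g x F)) \<le> card (lshadow l F)"
proof -
  have "card (lshadow l (compress g x F)) \<le> card (compress g x (lshadow l F))"
    using lshadow_compress_subset[OF assms(2,3)] finite_lshadow[OF assms(1,2)]
    by (intro card_mono) (auto simp: compress_def)
  also have "\<dots> = card (lshadow l F)" using card_compress[OF assms(3)] .
  finally show ?thesis .
qed

lemma card_containing_compress_less:
  assumes "finite H" "A \<in> H" "x \<in> A" "g \<notin> A" "insert g (A - {x}) \<notin> H"
  shows "card {B \<in> H. g \<in> B} < card {B \<in> compress g x H. g \<in> B}"
proof (rule psubset_card_mono)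
  show "finite {B \<in> compress g x H. g \<in> B}" using assms(1) unfolding compress_def by simp
  have "compress_set g x H B = B" if "g \<in> B" for B
    using that unfolding compress_set_def by auto
  then have "{B \<in> H. g \<in> B} \<subseteq> {B \<in> compress g x H. g \<in> B}"
    unfolding compress_def by auto
  moreover have "compress_set g x H A = insert g (A - {x})"
    using assms(3-5) unfolding compress_set_def by simp
  then have "insert g (A - {x}) \<in> {B \<in> compress g x H. g \<in> B}"
    using assms(2) unfolding compress_def by auto
  ultimately show "{B \<in> H. g \<in> B} \<subset> {B \<in> compress g x H. g \<in> B}" using assms(5) by blast
qed

section \<open>Links of shifted families\<close>

definition avoid :: "nat \<Rightarrow> nat set set \<Rightarrow> nat set set" where
  "avoid g H = {A \<in> H. g \<notin> A}"

definition link :: "nat \<Rightarrow> nat set set \<Rightarrow> nat set set" where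
  "link g H = (\<lambda>A. A - {g}) ` {A \<in> H. g \<in> A}"

lemma mem_link_iff: "B \<in> link g H \<longleftrightarrow> g \<notin> B \<and> insert g B \<in> H"
proof
  assume "B \<in> link g H"
  then obtain A where "A \<in> H" "g \<in> A" "B = A - {g}" unfolding link_def by auto
  then show "g \<notin> B \<and> insert g B \<in> H" by (simp add: insert_absorb)
next
  assume "g \<notin> B \<and> insert g B \<in> H"
  then show "B \<in> link g H" unfolding link_def by (intro image_eqI[of _ _ "insert g B"]) auto
qed

lemma finite_link: "finite H \<Longrightarrow> finite (link g H)"
  unfolding link_def by simp

lemma card_avoid_link:
  assumes "finite H" shows "card H = card (avoid g H) + card (link g H)"
proof -
  have "inj_on (\<lambda>A. A - {g}) {A \<in> H. g \<in> A}"
    by (rule inj_onI) (metis (no_types, lifting) insert_Diff mem_Collect_eq)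
  then have "card (link g H) = card {A \<in> H. g \<in> A}" unfolding link_def by (rule card_image)
  moreover have "card (avoid g H \<union> {A \<in> H. g \<in> A}) = card (avoid g H) + card {A \<in> H. g \<in> A}"
    using assms by (intro card_Un_disjoint) (auto simp: avoid_def)
  moreover have "avoid g H \<union> {A \<in> H. g \<in> A} = H" by (auto simp: avoid_def)
  ultimately show ?thesis by simp
qed

lemma lshadow_subset_link_if_shifted:
  assumes fin: "\<forall>B\<in>H. finite B" and sh: "shifted_to g H" and l: "1 \<le> l"
  shows "lshadow l H \<subseteq> lshadow (l - 1) (link g H) \<union> insert g ` lshadow l (link g H)"
proof
  fix A assume "A \<in> lshadow l H"
  then obtain B where B: "B \<in> H" "A \<subseteq> B" "card A + l = card B" unfolding lshadow_def by auto
  have finB: "finite B" using fin B by auto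
  show "A \<in> lshadow (l - 1) (link g H) \<union> insert g ` lshadow l (link g H)"
  proof (cases "g \<in> A")
    case True
    then have "B - {g} \<in> link g H"
      using B mem_link_iff[of "B - {g}" g H] by (simp add: insert_absorb subsetD)
    moreover have "card (A - {g}) + l = card (B - {g})"
    proof -
      have "finite A" using B(2) finB by (rule finite_subset)
      then have "0 < card A" using True card_gt_0_iff by blast
      then show ?thesis using B True finB by (simp add: card_Diff_singleton subsetD)
    qed
    ultimately have "A - {g} \<in> lshadow l (link g H)" using B(2) by (intro lshadowI) auto
    then have "A \<in> insert g ` lshadow l (link g H)" using True by (intro image_eqI) auto
    then show ?thesis by blast
  next
    case gA: False
    obtain x where x: "x \<in> B" "x \<notin> A" "g \<in> B \<Longrightarrow> x = g"
    proof (cases "g \<in> B")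
      case False
      moreover have "A \<noteq> B" using B(3) l by auto
      ultimately show ?thesis using that B(2) by blast
    qed (use gA that in blast)
    have "B - {x} \<in> link g H"
    proof (cases "g \<in> B")
      case True
      then show ?thesis using B(1) x(3) mem_link_iff[of "B - {g}" g H] by (simp add: insert_absorb)
    next
      case False
      then have "insert g (B - {x}) \<in> H" using sh B(1) x(1) unfolding shifted_to_def by blast
      then show ?thesis using False mem_link_iff by blast
    qed
    moreover have "card A + (l - 1) = card (B - {x})"
      using B x finB l by (simp add: card_Diff_singleton)
    ultimately have "A \<in> lshadow (l - 1) (link g H)"
      using B x by (intro lshadowI[of "B - {x}"]) auto
    then show ?thesis by blast
  qed
qed

lemma lshadow_link_subset:
  assumes fin: "\<forall>B\<in>H. finite B" and l: "1 \<le> l"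
  shows "lshadow (l - 1) (link g H) \<union> insert g ` lshadow l (link g H) \<subseteq> lshadow l H"
proof
  fix A assume "A \<in> lshadow (l - 1) (link g H) \<union> insert g ` lshadow l (link g H)"
  then consider B where "B \<in> link g H" "A \<subseteq> B" "card A + (l - 1) = card B"
    | A' B where "B \<in> link g H" "A' \<subseteq> B" "card A' + l = card B" "A = insert g A'"
    unfolding lshadow_def by blast
  then show "A \<in> lshadow l H"
  proof cases
    case (1 B)
    then have B: "insert g B \<in> H" "g \<notin> B" by (simp_all add: mem_link_iff)
    then have "finite B" using fin by (metis finite_insert)
    then have "card A + l = card (insert g B)" using 1(3) B(2) l by simp
    then show ?thesis using B(1) 1(2) by (intro lshadowI[of "insert g B"]) auto
  next
    case (2 A' B)
    then have B: "insert g B \<in> H" "g \<notin> B" by (simp_all add: mem_link_iff)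
    then have "finite B" using fin by (metis finite_insert)
    then have "finite A'" "g \<notin> A'" using 2(2) B(2) finite_subset by blast+
    then have "card A + l = card (insert g B)" using 2(3,4) B(2) \<open>finite B\<close> by simp
    then show ?thesis using B(1) 2(2,4) by (intro lshadowI[of "insert g B"]) auto
  qed
qed

lemma card_lshadow_shifted:
  assumes "finite H" "\<forall>B\<in>H. finite B" "shifted_to g H" "1 \<le> l"
  shows "card (lshadow l H) = card (lshadow (l - 1) (link g H)) + card (lshadow l (link g H))"
proof -
  have fin_link: "finite (link g H)" "\<forall>B\<in>link g H. finite B"
    using finite_link[OF assms(1)] assms(2) by (metis finite_insert mem_link_iff)+
  have g_notin: "\<forall>A\<in>lshadow j (link g H). g \<notin> A" for j
    unfolding lshadow_def using mem_link_iff by blast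
  have "inj_on (insert g) (lshadow l (link g H))"
    using g_notin by (intro inj_onI) (metis Diff_insert_absorb)
  then have "card (insert g ` lshadow l (link g H)) = card (lshadow l (link g H))"
    by (rule card_image)
  moreover have "lshadow (l - 1) (link g H) \<inter> insert g ` lshadow l (link g H) = {}"
    using g_notin by blast
  moreover have "lshadow l H = lshadow (l - 1) (link g H) \<union> insert g ` lshadow l (link g H)"
    using lshadow_subset_link_if_shifted[OF assms(2-4)] lshadow_link_subset[OF assms(2,4)] by blast
  ultimately show ?thesis using finite_lshadow[OF fin_link] by (simp add: card_Un_disjoint)
qed

lemma lshadow1_avoid_subset_link:
  assumes fin: "\<forall>B\<in>H. finite B" and sh: "shifted_to g H"
  shows "lshadow 1 (avoid g H) \<subseteq> link g H"
proof
  fix A assume "A \<in> lshadow 1 (avoid g H)"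
  then obtain B where B: "B \<in> H" "g \<notin> B" "A \<subseteq> B" "card A + 1 = card B"
    unfolding lshadow_def avoid_def by auto
  moreover have "A \<noteq> B" using B(4) by auto
  ultimately obtain x where x: "x \<in> B" "x \<notin> A" by blast
  have finB: "finite B" using fin B(1) by blast
  have "A \<subseteq> B - {x}" "card (B - {x}) = card A" using B x finB by auto
  then have "A = B - {x}" using finB by (metis card_subset_eq finite_Diff)
  moreover have "insert g (B - {x}) \<in> H" using sh B x unfolding shifted_to_def by blast
  ultimately show "A \<in> link g H" using mem_link_iff B(2) by auto
qed

section \<open>Shifting inside the families EM_on\<close>

definition EM_on :: "nat set \<Rightarrow> nat \<Rightarrow> nat \<Rightarrow> nat \<Rightarrow> nat set set" where
  "EM_on G k s t = {A. A \<subseteq> G \<and> card A = k \<and> t \<le> card (A \<inter> {1..s})}"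

lemma EM_eq_EM_on: "EM n k s t = EM_on {1..n} k s t"
  unfolding EM_def ksubsets_def EM_on_def by auto

lemma finite_EM_on: "finite G \<Longrightarrow> finite (EM_on G k s t)"
  by (rule finite_subset[of _ "Pow G"]) (auto simp: EM_on_def)

lemma finite_of_mem_EM_on: "finite G \<Longrightarrow> A \<in> EM_on G k s t \<Longrightarrow> finite A"
  unfolding EM_on_def by (auto intro: finite_subset)

lemma mem_EM_on_remove_iff: "g \<notin> A \<Longrightarrow> A \<in> EM_on (G - {g}) k s t \<longleftrightarrow> A \<in> EM_on G k s t"
  unfolding EM_on_def by auto

lemma insert_mem_EM_on_iff:
  assumes "finite G" "g \<in> G" "g \<notin> B" "1 \<le> k"
  shows "insert g B \<in> EM_on G k s t \<longleftrightarrow>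
         B \<in> EM_on (G - {g}) (k - 1) s (if g \<in> {1..s} then t - 1 else t)"
proof (cases "B \<subseteq> G - {g}")
  case True
  then have "finite B" using assms(1) by (auto intro: finite_subset)
  then have "card (insert g B) = card B + 1"
    and "card (insert g B \<inter> {1..s}) = card (B \<inter> {1..s}) + (if g \<in> {1..s} then 1 else 0)"
    using assms(3) by (simp_all add: Int_insert_left)
  then show ?thesis using True assms(2,4) unfolding EM_on_def by auto
qed (use assms(2,3) in \<open>auto simp: EM_on_def\<close>)

lemma insert_Min_remove_mem_EM_on:
  assumes "finite G" "0 \<notin> G" "A \<in> EM_on G k s t" "x \<in> A" "Min G \<notin> A"
  shows "insert (Min G) (A - {x}) \<in> EM_on G k s t"
proof -
  let ?g = "Min G" and ?A' = "insert (Min G) (A - {x})"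
  have AG: "A \<subseteq> G" and cA: "card A = k" and tA: "t \<le> card (A \<inter> {1..s})"
    using assms(3) unfolding EM_on_def by auto
  have finA: "finite A" using AG assms(1) by (rule finite_subset)
  have gG: "?g \<in> G" using assms(1,4) AG by (intro Min_in) auto
  have "?g < x" using assms(1,4,5) AG Min_le[of G x] by (auto simp: order_le_less)
  have "?g \<ge> 1" using gG assms(2) by (cases ?g) auto
  have "card (A \<inter> {1..s}) \<le> card (?A' \<inter> {1..s})"
  proof (cases "x \<in> {1..s}")
    case True
    then have "?A' \<inter> {1..s} = insert ?g ((A \<inter> {1..s}) - {x})"
      using \<open>?g < x\<close> \<open>?g \<ge> 1\<close> by auto
    then show ?thesis using True assms(4,5) finA by (simp add: card_insert_remove)
  next
    case False
    then have "A \<inter> {1..s} \<subseteq> ?A' \<inter> {1..s}" by auto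
    then show ?thesis using finA by (intro card_mono) auto
  qed
  moreover have "card ?A' = k" using card_insert_remove[OF finA assms(4,5)] cA by simp
  ultimately show ?thesis unfolding EM_on_def using tA AG gG by auto
qed

lemma compress_Min_subset_EM_on:
  assumes "finite G" "0 \<notin> G" "H \<subseteq> EM_on G k s t"
  shows "compress (Min G) x H \<subseteq> EM_on G k s t"
proof
  fix A' assume "A' \<in> compress (Min G) x H"
  then obtain A where A: "A \<in> H" "A' = compress_set (Min G) x H A" unfolding compress_def by auto
  then have AE: "A \<in> EM_on G k s t" using assms(3) by blast
  show "A' \<in> EM_on G k s t"
  proof (cases "x \<in> A \<and> Min G \<notin> A")
    case True
    then show ?thesis
      using A(2) AE insert_Min_remove_mem_EM_on[OF assms(1,2) AE] unfolding compress_set_def by simp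
  next
    case False
    then show ?thesis using A(2) AE unfolding compress_set_def by auto
  qed
qed

lemma exists_shifted_to_Min:
  assumes "finite G" "0 \<notin> G" "H \<subseteq> EM_on G k s t"
  shows "\<exists>H'. H' \<subseteq> EM_on G k s t \<and> card H' = card H \<and> shifted_to (Min G) H'
           \<and> (\<forall>l. card (lshadow l H') \<le> card (lshadow l H))"
  using assms(3)
proof (induction "card H - card {A \<in> H. Min G \<in> A}" arbitrary: H rule: less_induct)
  case less
  let ?g = "Min G"
  have finH: "finite H" using less.prems finite_EM_on[OF assms(1)] by (rule finite_subset)
  have fin_mem: "\<forall>B\<in>H. finite B" using less.prems finite_of_mem_EM_on[OF assms(1)] by blast
  show ?case
  proof (cases "shifted_to ?g H")
    case True
    then show ?thesis using less.prems by (intro exI[of _ H]) auto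
  next
    case False
    then obtain A x where A: "A \<in> H" "x \<in> A" "?g \<notin> A" "insert ?g (A - {x}) \<notin> H"
      unfolding shifted_to_def by blast
    let ?H = "compress ?g x H"
    have "?g \<noteq> x" using A by auto
    have "card {A \<in> H. ?g \<in> A} < card {A \<in> ?H. ?g \<in> A}"
      using card_containing_compress_less[OF finH A] .
    moreover have "card {A \<in> ?H. ?g \<in> A} \<le> card ?H"
      using finH unfolding compress_def by (intro card_mono) auto
    moreover have card_H: "card ?H = card H" using card_compress[OF \<open>?g \<noteq> x\<close>] .
    ultimately have "card ?H - card {A \<in> ?H. ?g \<in> A} < card H - card {A \<in> H. ?g \<in> A}"
      by linarith
    moreover have "?H \<subseteq> EM_on G k s t" using compress_Min_subset_EM_on[OF assms(1,2) less.prems] .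
    ultimately obtain H' where H': "H' \<subseteq> EM_on G k s t" "card H' = card ?H" "shifted_to ?g H'"
      and shadow_H': "\<forall>l. card (lshadow l H') \<le> card (lshadow l ?H)"
      using less.hyps[of ?H] by blast
    have "card (lshadow l H') \<le> card (lshadow l H)" for l
      using shadow_H' card_lshadow_compress_le[OF finH fin_mem \<open>?g \<noteq> x\<close>, of l] by (meson le_trans)
    then show ?thesis using H' card_H by (intro exI[of _ H']) auto
  qed
qed

lemma is_colex_initial_shifted_to_Min:
  assumes "finite G" "0 \<notin> G" "is_colex_initial C (EM_on G k s t)"
  shows "shifted_to (Min G) C"
  unfolding shifted_to_def
proof (intro ballI impI)
  fix A x assume A: "A \<in> C" and x: "x \<in> A" and gA: "Min G \<notin> A"
  have AE: "A \<in> EM_on G k s t" using A assms(3) unfolding is_colex_initial_def by auto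
  have "x \<in> G" using AE x unfolding EM_on_def by auto
  then have "Min G < x" using assms(1) x gA Min_le[of G x] by (auto simp: order_le_less)
  then have "\<exists>m\<in>A. m \<notin> insert (Min G) (A - {x}) \<and>
      (\<forall>y>m. y \<in> insert (Min G) (A - {x}) \<longleftrightarrow> y \<in> A)"
    using x by auto
  then have "colex_less (insert (Min G) (A - {x})) A"
    using colex_less_iff finite_of_mem_EM_on[OF assms(1) AE] by simp
  then show "insert (Min G) (A - {x}) \<in> C"
    using assms(3) A insert_Min_remove_mem_EM_on[OF assms(1,2) AE x gA]
    unfolding is_colex_initial_def by blast
qed

lemma is_colex_initial_link:
  assumes "finite G" "g \<in> G" "1 \<le> k" "is_colex_initial C (EM_on G k s t)"
  shows "is_colex_initial (link g C) (EM_on (G - {g}) (k - 1) s (if g \<in> {1..s} then t - 1 else t))"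
  unfolding is_colex_initial_def
proof (intro conjI ballI impI subsetI)
  fix B assume "B \<in> link g C"
  then have "g \<notin> B" "insert g B \<in> EM_on G k s t"
    using assms(4) unfolding mem_link_iff is_colex_initial_def by auto
  then show "B \<in> EM_on (G - {g}) (k - 1) s (if g \<in> {1..s} then t - 1 else t)"
    using insert_mem_EM_on_iff[OF assms(1-2) _ assms(3)] by blast
next
  fix B B' assume B: "B \<in> link g C"
    and B': "B' \<in> EM_on (G - {g}) (k - 1) s (if g \<in> {1..s} then t - 1 else t)"
    and "colex_less B' B"
  have gB: "g \<notin> B" and iB: "insert g B \<in> C" using B mem_link_iff by auto
  have gB': "g \<notin> B'" using B' unfolding EM_on_def by auto
  have iB'E: "insert g B' \<in> EM_on G k s t"
    using insert_mem_EM_on_iff[OF assms(1,2) gB' assms(3)] B' by simp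
  have "insert g B \<in> EM_on G k s t" using iB assms(4) unfolding is_colex_initial_def by auto
  then have "colex_less (insert g B') (insert g B)"
    using colex_less_insert gB \<open>colex_less B' B\<close> iB'E finite_of_mem_EM_on[OF assms(1)]
    by (metis finite_insert)
  then have "insert g B' \<in> C" using assms(4) iB iB'E unfolding is_colex_initial_def by blast
  then show "B' \<in> link g C" using mem_link_iff gB' by auto
qed

lemma insert_least_missing_mem_EM_on:
  assumes "finite G" "0 \<notin> G" "g = Min G"
    and P: "insert g B \<in> EM_on G k s t" and gB: "g \<notin> B"
    and Q: "Q \<in> EM_on (G - {g}) k s t"
    and x: "x \<in> G - insert g B" and x_least: "\<forall>y\<in>G - insert g B. x \<le> y"
  shows "insert x B \<in> EM_on (G - {g}) k s t"
proof -
  have BG: "insert g B \<subseteq> G" and cP: "card (insert g B) = k"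
    and tP: "t \<le> card (insert g B \<inter> {1..s})"
    using P unfolding EM_on_def by auto
  have finB: "finite B" using BG assms(1) by (auto intro: finite_subset)
  have "x \<noteq> 0" using x assms(2) by (metis DiffD1)
  have "t \<le> card (insert x B \<inter> {1..s})"
  proof (cases "g \<in> {1..s} \<and> x \<notin> {1..s}")
    case True
    \<comment> \<open>here x > s, and every element of G - {g} below the least missing element x lies in B\<close>
    have "Q \<inter> {1..s} \<subseteq> insert x B \<inter> {1..s}"
    proof
      fix y assume y: "y \<in> Q \<inter> {1..s}"
      then have "y < x" using True \<open>x \<noteq> 0\<close> by auto
      then show "y \<in> insert x B \<inter> {1..s}"
        using y Q x_least unfolding EM_on_def by (auto simp: not_le[symmetric])
    qed
    then have "card (Q \<inter> {1..s}) \<le> card (insert x B \<inter> {1..s})"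
      using finB by (intro card_mono) auto
    then show ?thesis using Q unfolding EM_on_def by auto
  next
    case False
    then have "card (insert g B \<inter> {1..s}) \<le> card (insert x B \<inter> {1..s})"
      using finB gB x by (auto simp: Int_insert_left intro: card_mono)
    then show ?thesis using tP by linarith
  qed
  moreover have "card (insert x B) = k" using cP finB gB x by simp
  ultimately show ?thesis using BG x gB unfolding EM_on_def by auto
qed

lemma link_subset_lshadow1:
  assumes fG: "finite G" and z: "0 \<notin> G" and g: "g = Min G"
    and C: "is_colex_initial C (EM_on G k s t)"
    and D: "is_colex_initial D (EM_on (G - {g}) k s t)"
    and Q: "Q \<in> D" "Q \<notin> C"
  shows "link g C \<subseteq> lshadow 1 D"
proof
  fix B assume "B \<in> link g C"
  then have gB: "g \<notin> B" and P: "insert g B \<in> C" by (simp_all add: mem_link_iff)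
  have PE: "insert g B \<in> EM_on G k s t" using P C unfolding is_colex_initial_def by auto
  have QE0: "Q \<in> EM_on (G - {g}) k s t" using Q D unfolding is_colex_initial_def by auto
  then have gQ: "g \<notin> Q" and QG: "Q \<subseteq> G - {g}" and cQ: "card Q = k"
    unfolding EM_on_def by auto
  have QE: "Q \<in> EM_on G k s t" using QE0 mem_EM_on_remove_iff[OF gQ] by simp
  have finP: "finite (insert g B)" using finite_of_mem_EM_on[OF fG PE] .
  have finQ: "finite Q" using finite_of_mem_EM_on[OF fG QE] .
  have "\<not> colex_less Q (insert g B)" using C P QE Q(2) unfolding is_colex_initial_def by blast
  moreover have "insert g B \<noteq> Q" using gQ by auto
  ultimately have PQ: "colex_less (insert g B) Q" using colex_less_total[OF finP finQ] by blast
  then obtain m where "m \<in> Q" "m \<notin> insert g B" using colex_less_iff[OF finP finQ] by blast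
  then have "G - insert g B \<noteq> {}" using QG by auto
  define x where "x = Min (G - insert g B)"
  have x: "x \<in> G - insert g B"
    unfolding x_def using fG \<open>G - insert g B \<noteq> {}\<close> by (intro Min_in) auto
  have x_least: "\<forall>y\<in>G - insert g B. x \<le> y" unfolding x_def using fG by (auto intro: Min_le)
  have A: "insert x B \<in> EM_on (G - {g}) k s t"
    using insert_least_missing_mem_EM_on[OF fG z g PE gB QE0 x x_least] .
  have "g < y" if "y \<in> Q" for y
    using that QG fG g Min_le[of G y] by (auto simp: order_le_less)
  moreover have "y \<in> insert g B" if "y \<in> Q" "y < x" for y
    using that QG x_least leD by blast
  moreover have "card (insert g B) = card Q" using PE cQ unfolding EM_on_def by simp
  moreover have "x \<notin> insert g B" using x by blast
  ultimately have "insert x (insert g B - {g}) = Q \<or> colex_less (insert x (insert g B - {g})) Q"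
    using colex_replace_least[OF finP finQ _ PQ] by blast
  moreover have "insert x (insert g B - {g}) = insert x B" using gB by auto
  ultimately have "insert x B = Q \<or> colex_less (insert x B) Q" by simp
  then have "insert x B \<in> D" using D Q(1) A unfolding is_colex_initial_def by blast
  moreover have "card B + 1 = card (insert x B)" using finP gB x by simp
  ultimately show "B \<in> lshadow 1 D" by (intro lshadowI) auto
qed

section \<open>Colex initial segments minimise shadows\<close>

definition colex_minimizes_shadow :: "nat \<Rightarrow> nat set set \<Rightarrow> bool" where
  "colex_minimizes_shadow l E \<longleftrightarrow>
     (\<forall>H\<subseteq>E. card (lshadow l (colex_initial (card H) E)) \<le> card (lshadow l H))"

lemma colex_minimizes_shadow_0:
  assumes "finite E" "\<forall>B\<in>E. finite B"
  shows "colex_minimizes_shadow 0 E"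
  unfolding colex_minimizes_shadow_def
proof (intro allI impI)
  fix H assume "H \<subseteq> E"
  then have "card (colex_initial (card H) E) = card H" by (rule card_colex_initial_card[OF assms])
  moreover have "\<forall>B\<in>colex_initial (card H) E. finite B" using assms(2) colex_initial_subset by blast
  moreover have "\<forall>B\<in>H. finite B" using assms(2) \<open>H \<subseteq> E\<close> by blast
  ultimately show "card (lshadow 0 (colex_initial (card H) E)) \<le> card (lshadow 0 H)"
    by (simp add: lshadow_0)
qed

lemma colex_minimizes_shadow_small:
  assumes "\<forall>B\<in>E. card B < l"
  shows "colex_minimizes_shadow l E"
proof -
  have "lshadow l E = {}" using assms unfolding lshadow_def by fastforce
  then have "lshadow l (colex_initial m E) = {}" for m
    using lshadow_mono[OF colex_initial_subset] by blast
  then show ?thesis unfolding colex_minimizes_shadow_def by simp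
qed

lemma card_link_colex_initial_le:
  assumes fG: "finite G" and z: "0 \<notin> G" and g: "g = Min G"
    and H: "H \<subseteq> EM_on G k s t" and sh: "shifted_to g H"
    and IH: "colex_minimizes_shadow 1 (EM_on (G - {g}) k s t)"
  shows "card (link g (colex_initial (card H) (EM_on G k s t))) \<le> card (link g H)"
proof -
  let ?E = "EM_on G k s t"
  let ?E' = "EM_on (G - {g}) k s t"
  define C where "C = colex_initial (card H) ?E"
  have finE: "finite ?E" "\<forall>B\<in>?E. finite B"
    using finite_EM_on[OF fG] finite_of_mem_EM_on[OF fG] by auto
  have finE': "finite ?E'" "\<forall>B\<in>?E'. finite B"
    using finite_EM_on[of "G - {g}"] finite_of_mem_EM_on[of "G - {g}"] fG by auto
  have finH: "finite H" "\<forall>B\<in>H. finite B" using H finE finite_subset by auto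
  have finC: "finite C" using C_def colex_initial_subset finE(1) finite_subset by metis
  have cC: "card C = card H" unfolding C_def using card_colex_initial_card[OF finE H] .
  show ?thesis
  proof (cases "card (avoid g H) \<le> card (avoid g C)")
    case True
    then show ?thesis unfolding C_def[symmetric]
      using cC card_avoid_link[OF finC, of g] card_avoid_link[OF finH(1), of g] by linarith
  next
    case False
    have avoid_H: "avoid g H \<subseteq> ?E'" using H mem_EM_on_remove_iff unfolding avoid_def by blast
    define D where "D = colex_initial (card (avoid g H)) ?E'"
    have "card D = card (avoid g H)"
      unfolding D_def using card_colex_initial_card[OF finE' avoid_H] .
    then have "\<not> D \<subseteq> avoid g C"
      using False finC card_mono[of "avoid g C" D] unfolding avoid_def by auto
    then obtain Q where "Q \<in> D" "Q \<notin> avoid g C" by blast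
    moreover have "g \<notin> Q"
      using \<open>Q \<in> D\<close> colex_initial_subset unfolding D_def EM_on_def by blast
    ultimately have "Q \<notin> C" unfolding avoid_def by blast
    have "card (link g C) \<le> card (lshadow 1 D)"
    proof (rule card_mono)
      show "finite (lshadow 1 D)"
        using finE' colex_initial_subset unfolding D_def
        by (metis finite_lshadow finite_subset subset_iff)
      show "link g C \<subseteq> lshadow 1 D"
        using link_subset_lshadow1[OF fG z g _ _ \<open>Q \<in> D\<close> \<open>Q \<notin> C\<close>]
          is_colex_initial_colex_initial[OF finE] is_colex_initial_colex_initial[OF finE']
        unfolding C_def D_def by blast
    qed
    also have "\<dots> \<le> card (lshadow 1 (avoid g H))"
      using IH avoid_H unfolding D_def colex_minimizes_shadow_def by blast
    also have "\<dots> \<le> card (link g H)"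
      using lshadow1_avoid_subset_link[OF finH(2) sh] finite_link[OF finH(1)]
      by (rule card_mono[rotated])
    finally show ?thesis unfolding C_def .
  qed
qed

lemma colex_minimizes_shadow_step:
  assumes fG: "finite G" and z: "0 \<notin> G" and "G \<noteq> {}" and g: "g = Min G"
    and k: "1 \<le> k" and l: "1 \<le> l"
    and IH_avoid: "colex_minimizes_shadow 1 (EM_on (G - {g}) k s t)"
    and IH_link: "\<And>j. colex_minimizes_shadow j
                          (EM_on (G - {g}) (k - 1) s (if g \<in> {1..s} then t - 1 else t))"
  shows "colex_minimizes_shadow l (EM_on G k s t)"
  unfolding colex_minimizes_shadow_def
proof (intro allI impI)
  let ?E = "EM_on G k s t"
  let ?E' = "EM_on (G - {g}) (k - 1) s (if g \<in> {1..s} then t - 1 else t)"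
  fix H assume H: "H \<subseteq> ?E"
  have gG: "g \<in> G" using fG \<open>G \<noteq> {}\<close> g by simp
  have finE: "finite ?E" "\<forall>B\<in>?E. finite B"
    using finite_EM_on[OF fG] finite_of_mem_EM_on[OF fG] by auto
  have finE': "finite ?E'" "\<forall>B\<in>?E'. finite B"
    using finite_EM_on[of "G - {g}"] finite_of_mem_EM_on[of "G - {g}"] fG by auto
  obtain H' where H': "H' \<subseteq> ?E" "card H' = card H" "shifted_to g H'"
    and shadow_H': "\<forall>l. card (lshadow l H') \<le> card (lshadow l H)"
    using exists_shifted_to_Min[OF fG z H] g by blast
  have finH': "finite H'" "\<forall>B\<in>H'. finite B" using H'(1) finE finite_subset by auto
  define C where "C = colex_initial (card H) ?E"
  have C: "is_colex_initial C ?E" unfolding C_def using is_colex_initial_colex_initial[OF finE] .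
  have finC: "finite C" "\<forall>B\<in>C. finite B"
    using C finE finite_subset unfolding is_colex_initial_def by auto
  have link_H': "link g H' \<subseteq> ?E'"
    using H'(1) insert_mem_EM_on_iff[OF fG gG _ k] by (auto simp: mem_link_iff)
  have link_C: "link g C = colex_initial (card (link g C)) ?E'"
    using is_colex_initial_eq[OF finE' is_colex_initial_link[OF fG gG k C]] .
  have "card (link g C) \<le> card (link g H')"
    using card_link_colex_initial_le[OF fG z g H'(1,3)] IH_avoid H'(2) unfolding C_def by simp
  then have "card (lshadow j (link g C))
      \<le> card (lshadow j (colex_initial (card (link g H')) ?E'))" for j
    using card_lshadow_colex_initial_mono[OF finE'] link_C by metis
  also have "\<dots> j \<le> card (lshadow j (link g H'))" for j
    using IH_link link_H' unfolding colex_minimizes_shadow_def by blast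
  finally have link_shadows: "card (lshadow j (link g C)) \<le> card (lshadow j (link g H'))" for j .
  have "card (lshadow l C) \<le> card (lshadow l H')"
    using card_lshadow_shifted[OF finC is_colex_initial_shifted_to_Min[OF fG z C] l]
      card_lshadow_shifted[OF finH' H'(3) l] link_shadows[of "l - 1"] link_shadows[of l] g
    by simp
  then show "card (lshadow l (colex_initial (card H) ?E)) \<le> card (lshadow l H)"
    using shadow_H' unfolding C_def by (meson le_trans)
qed

theorem colex_minimizes_shadow_EM_on:
  assumes "finite G" "0 \<notin> G"
  shows "colex_minimizes_shadow l (EM_on G k s t)"
  using assms
proof (induction "card G" arbitrary: G k s t l rule: less_induct)
  case less
  have finE: "finite (EM_on G k s t)" "\<forall>B\<in>EM_on G k s t. finite B"
    using finite_EM_on finite_of_mem_EM_on less.prems(1) by auto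
  show ?case
  proof (cases "l = 0")
    case True
    then show ?thesis using colex_minimizes_shadow_0[OF finE] by simp
  next
    case l: False
    show ?thesis
    proof (cases "k = 0 \<or> G = {}")
      case True
      then have "\<forall>B\<in>EM_on G k s t. card B < l" using l unfolding EM_on_def by auto
      then show ?thesis by (rule colex_minimizes_shadow_small)
    next
      case False
      let ?G = "G - {Min G}"
      have "card ?G < card G" using less.prems(1) False by (intro card_Diff1_less) auto
      then have IH: "colex_minimizes_shadow j (EM_on ?G k' s' t')" for j k' s' t'
        using less.hyps less.prems by simp
      show ?thesis
        using colex_minimizes_shadow_step[OF less.prems _ refl _ _ IH IH] False l by simp
    qed
  qed
qed

theorem corollary2p6:
  fixes n k s t l m :: nat and H :: "nat set set"
  assumes "n \<ge> k" and "s \<ge> t" and "1 \<le> l" and "l \<le> k - 1"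
    and "H \<subseteq> EM n k s t" and "card H = m"
  shows "card (shadow k l H) \<ge> card (shadow k l (colex_initial m (EM n k s t)))"
proof -
  have "l \<le> k" using assms(3,4) by linarith
  have uniform: "\<forall>B\<in>F. finite B \<and> card B = k" if "F \<subseteq> EM n k s t" for F
    using that unfolding EM_def ksubsets_def by (auto intro: finite_subset)
  have "shadow k l H = lshadow l H"
    using shadow_eq_lshadow[OF uniform[OF assms(5)] \<open>l \<le> k\<close>] .
  moreover have
    "shadow k l (colex_initial m (EM n k s t)) = lshadow l (colex_initial m (EM n k s t))"
    using shadow_eq_lshadow[OF uniform[OF colex_initial_subset] \<open>l \<le> k\<close>] .
  moreover have "card (lshadow l (colex_initial m (EM n k s t))) \<le> card (lshadow l H)"
    using colex_minimizes_shadow_EM_on[of "{1..n}" l k s t] assms(5,6)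
    unfolding colex_minimizes_shadow_def EM_eq_EM_on by auto
  ultimately show ?thesis by simp
qed

end
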